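(* Let $d$ be a positive integer, $b\geqslant5$ an integer and $a>0$ real with $\zeta=\log_b a\notin\mathbb{Q}$. Define $f:\mathbb{T}^d\to\mathbb{T}^d$ by $f(x)_i=\{\zeta+\sum_{j=1}^{i}\binom{i}{j}x_j\}$, $i=1,\dots,d$. Call the subsets $\{x\in\mathbb{T}^d: x_d=\log_b t\}$, $t\in\{1,\dots,b-1\}$ (i.e. $x_d\in\{0,\log_b2,\dots,\log_b(b-1)\}$), the critical subsets, and for $x\in\mathbb{T}^d$ let $I_x=\{k\in\mathbb{Z}: f^k(x)\text{ lies in a critical subset}\}$. Then: (i) for every finite set $I\subset\mathbb{Z}$ with $\#I=d$, the set of $x\in\mathbb{T}^d$ with $I\subseteq I_x$ is finite; (ii) there is a constant $C$ depending only on $d,a,b$ such that if $\#I_x>d$ then $\max_{k\in I_x}k-\min_{k\in I_x}k\leqslant C$.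
   Context: $\mathbb{T}^d=\mathbb{R}^d/\mathbb{Z}^d$ identified with $[0,1)^d$; $\{y\}$ is the fractional part; $f$ is a homeomorphism so $f^k$ is defined for all $k\in\mathbb{Z}$. *)

theory Defs
  imports Complex_Main
begin

text \<open>Points of the torus T^d are represented as functions nat => real, with
  coordinates indexed by 1..d taking values in [0,1), and value 0 elsewhere.\<close>

definition torus :: "nat \<Rightarrow> (nat \<Rightarrow> real) set" where
  "torus d = {x. (\<forall>i\<in>{1..d}. 0 \<le> x i \<and> x i < 1) \<and> (\<forall>i. i \<notin> {1..d} \<longrightarrow> x i = 0)}"

definition fmap :: "nat \<Rightarrow> real \<Rightarrow> (nat \<Rightarrow> real) \<Rightarrow> (nat \<Rightarrow> real)" where
  "fmap d \<zeta> x = (\<lambda>i. if i \<in> {1..d}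
      then frac (\<zeta> + (\<Sum>j=1..i. real (i choose j) * x j)) else 0)"

text \<open>Integer iterates f^k (f is a bijection of the torus; negative iterates use its inverse).\<close>
definition fiter :: "nat \<Rightarrow> real \<Rightarrow> int \<Rightarrow> (nat \<Rightarrow> real) \<Rightarrow> (nat \<Rightarrow> real)" where
  "fiter d \<zeta> k = (if 0 \<le> k then fmap d \<zeta> ^^ nat k
      else inv_into (torus d) (fmap d \<zeta>) ^^ nat (- k))"

definition critical :: "nat \<Rightarrow> nat \<Rightarrow> (nat \<Rightarrow> real) set" where
  "critical d b = {x \<in> torus d. \<exists>t\<in>{1..b-1}. x d = log (real b) (real t)}"

definition Ix :: "nat \<Rightarrow> real \<Rightarrow> nat \<Rightarrow> (nat \<Rightarrow> real) \<Rightarrow> int set" where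
  "Ix d \<zeta> b x = {k. fiter d \<zeta> k x \<in> critical d b}"

end

theory Submission
  imports Defs "HOL-Computational_Algebra.Primes" "HOL-Computational_Algebra.Polynomial"
    "HOL-Library.FuncSet"
begin

text \<open>
  Put \<zeta> into coordinate 0. Then f is the reduction mod 1 of the binomial transform T_1,
  where (T_k y)_i = sum_j (i choose j) k^(i-j) y_j. Since T_m T_k = T_(k+m) and T_m has integer
  coefficients for integral m, f^k is the reduction of T_k for every integer k. So the last
  coordinate of f^k(x) is frac (P_x k) for a polynomial P_x of degree d with leading coefficient
  \<zeta>, whose other coefficients are binomial multiples of x_1, ..., x_d.

  (i) A critical time k fixes P_x(k) mod 1 to one of b - 1 values, and |P_x(k)| is bounded, so
  P_x(k) ranges over a finite set; d values and the leading coefficient determine P_x, hence x.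

  (ii) For d + 1 critical times J the divided difference of P_x over J is \<zeta>. Writing
  P_x(i) = n_i + log_b t_i and factoring b and the t_i, this expands ln a in the logarithms of
  the primes p <= b with rational coefficients. Such an expansion is unique, as these logarithms
  are linearly independent over \<rat>; if there is none, #I_x <= d for all x. Otherwise, as \<zeta> is
  irrational, it is not proportional to the expansion of ln b, so some functional
  u |-> u_p v_q(b) - u_q v_p(b) kills ln b but not ln a. Applied to the divided difference it
  removes the unknown n_i, and each remaining term is at most
  b^2 / |prod_(j ~= i) (i - j)| <= 2 b^2 / (max J - min J), which bounds the spread of I_x.
\<close>

definition binomial_transform :: "'a::comm_semiring_1 \<Rightarrow> (nat \<Rightarrow> 'a) \<Rightarrow> nat \<Rightarrow> 'a" where
  "binomial_transform k y i = (\<Sum>j\<le>i. of_nat (i choose j) * k ^ (i - j) * y j)"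

lemma binomial_transform_0 [simp]: "binomial_transform 0 y = y"
proof
  fix i
  have "binomial_transform 0 y i = (\<Sum>j\<in>{i}. of_nat (i choose j) * 0 ^ (i - j) * y j)"
    unfolding binomial_transform_def by (rule sum.mono_neutral_right) (auto simp: power_0_left)
  then show "binomial_transform 0 y i = y i" by simp
qed

lemma binomial_transform_nth_0 [simp]: "binomial_transform k y 0 = y 0"
  by (simp add: binomial_transform_def)

lemma sum_choose_mult_powers:
  fixes k m :: "'a::comm_semiring_1"
  assumes "l \<le> i"
  shows "(\<Sum>j=l..i. of_nat (i choose j) * of_nat (j choose l) * k ^ (j - l) * m ^ (i - j))
       = of_nat (i choose l) * (k + m) ^ (i - l)"
proof -
  define u where "u r = of_nat ((i - l) choose r) * k ^ r * m ^ (i - l - r)" for r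
  have "of_nat (i choose j) * of_nat (j choose l) * k ^ (j - l) * m ^ (i - j)
      = of_nat (i choose l) * u (j - l)" if "j \<in> {l..i}" for j
  proof -
    have "(i choose j) * (j choose l) = (i choose l) * ((i - l) choose (j - l))"
      using that by (simp add: choose_mult)
    then have "of_nat (i choose j) * of_nat (j choose l)
        = (of_nat (i choose l) * of_nat ((i - l) choose (j - l)) :: 'a)"
      by (metis of_nat_mult)
    moreover have "i - l - (j - l) = i - j" using that by simp
    ultimately show ?thesis by (simp add: u_def algebra_simps)
  qed
  then have "(\<Sum>j=l..i. of_nat (i choose j) * of_nat (j choose l) * k ^ (j - l) * m ^ (i - j))
      = of_nat (i choose l) * (\<Sum>j=0 + l..i - l + l. u (j - l))"
    using assms by (simp add: sum_distrib_left)
  also have "\<dots> = of_nat (i choose l) * (\<Sum>r\<le>i - l. u r)"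
    by (subst sum.shift_bounds_cl_nat_ivl) (simp add: atLeast0AtMost)
  also have "\<dots> = of_nat (i choose l) * (k + m) ^ (i - l)"
    by (simp add: u_def binomial_ring)
  finally show ?thesis .
qed

lemma binomial_transform_add:
  "binomial_transform m (binomial_transform k y) = binomial_transform (k + m) y"
proof
  fix i
  define t where
    "t j l = of_nat (i choose j) * of_nat (j choose l) * k ^ (j - l) * m ^ (i - j) * y l" for j l
  have inner: "(\<Sum>j\<in>{j\<in>{..i}. l \<le> j}. t j l) = of_nat (i choose l) * (k + m) ^ (i - l) * y l"
    if "l \<le> i" for l
  proof -
    have "{j\<in>{..i}. l \<le> j} = {l..i}" by auto
    then show ?thesis
      using that by (simp add: t_def sum_choose_mult_powers flip: sum_distrib_right)
  qed
  have "binomial_transform m (binomial_transform k y) i = (\<Sum>j\<le>i. \<Sum>l\<le>j. t j l)"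
    unfolding binomial_transform_def t_def by (simp add: sum_distrib_left algebra_simps)
  also have "\<dots> = (\<Sum>j\<in>{..i}. \<Sum>l\<in>{l\<in>{..i}. l \<le> j}. t j l)"
    by (intro sum.cong) auto
  also have "\<dots> = (\<Sum>l\<in>{..i}. \<Sum>j\<in>{j\<in>{..i}. l \<le> j}. t j l)"
    by (rule sum.swap_restrict) auto
  also have "\<dots> = binomial_transform (k + m) y i"
    unfolding binomial_transform_def by (rule sum.cong[OF refl], rule inner) simp
  finally show "binomial_transform m (binomial_transform k y) i = binomial_transform (k + m) y i" .
qed

lemma frac_binomial_transform_cong:
  fixes m :: real
  assumes "m \<in> \<int>" and "\<And>j. j \<le> i \<Longrightarrow> y' j - y j \<in> \<int>"
  shows "frac (binomial_transform m y' i) = frac (binomial_transform m y i)"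
proof -
  have "binomial_transform m y' i - binomial_transform m y i
      = (\<Sum>j\<le>i. of_nat (i choose j) * m ^ (i - j) * (y' j - y j))"
    by (simp add: binomial_transform_def sum_subtractf algebra_simps)
  also have "\<dots> \<in> \<int>" using assms by (intro Ints_sum Ints_mult Ints_power) auto
  finally show ?thesis
    by (metis diff_add_cancel frac_add_int_left add.commute)
qed

definition orbit_point :: "nat \<Rightarrow> real \<Rightarrow> real \<Rightarrow> (nat \<Rightarrow> real) \<Rightarrow> (nat \<Rightarrow> real)" where
  "orbit_point d z k x = (\<lambda>i. if i \<in> {1..d} then frac (binomial_transform k (x(0 := z)) i) else 0)"

lemma orbit_point_in_torus: "orbit_point d z k x \<in> torus d"
  by (auto simp: orbit_point_def torus_def frac_lt_1)

lemma orbit_point_0: "x \<in> torus d \<Longrightarrow> orbit_point d z 0 x = x"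
  by (auto simp: orbit_point_def torus_def fun_eq_iff)

lemma fmap_eq_orbit_point: "fmap d z = orbit_point d z 1"
proof -
  have "binomial_transform 1 (x(0 := z)) i = z + (\<Sum>j=1..i. real (i choose j) * x j)" for x i
  proof -
    have "{..i} = insert 0 {1..i}" by auto
    then show ?thesis by (simp add: binomial_transform_def)
  qed
  then show ?thesis by (simp add: fun_eq_iff fmap_def orbit_point_def)
qed

lemma orbit_point_orbit_point:
  assumes "m \<in> \<int>"
  shows "orbit_point d z m (orbit_point d z k x) = orbit_point d z (k + m) x"
proof -
  have "frac (binomial_transform m ((orbit_point d z k x)(0 := z)) i)
      = frac (binomial_transform m (binomial_transform k (x(0 := z))) i)" if "i \<in> {1..d}" for i
  proof (rule frac_binomial_transform_cong[OF assms])
    fix j assume "j \<le> i"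
    then show "((orbit_point d z k x)(0 := z)) j - binomial_transform k (x(0 := z)) j \<in> \<int>"
      using that by (cases "j = 0") (auto simp: orbit_point_def frac_def)
  qed
  then show ?thesis
    by (simp add: orbit_point_def fun_eq_iff binomial_transform_add)
qed

lemma orbit_point_minus_one_fmap: "x \<in> torus d \<Longrightarrow> orbit_point d z (-1) (fmap d z x) = x"
  by (simp add: fmap_eq_orbit_point orbit_point_orbit_point orbit_point_0)

lemma inj_on_fmap: "inj_on (fmap d z) (torus d)"
  by (metis inj_onI orbit_point_minus_one_fmap)

lemma inv_into_fmap: "x \<in> torus d \<Longrightarrow> inv_into (torus d) (fmap d z) x = orbit_point d z (-1) x"
  by (intro inv_into_f_eq inj_on_fmap orbit_point_in_torus)
     (simp add: fmap_eq_orbit_point orbit_point_orbit_point orbit_point_0)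

lemma fiter_eq_orbit_point:
  assumes "x \<in> torus d"
  shows "fiter d z k x = orbit_point d z (of_int k) x"
proof -
  have "(fmap d z ^^ n) x = orbit_point d z (of_nat n) x" for n
    by (induction n) (simp_all add: assms orbit_point_0 fmap_eq_orbit_point orbit_point_orbit_point add.commute)
  moreover have "(inv_into (torus d) (fmap d z) ^^ n) x = orbit_point d z (- of_nat n) x" for n
    by (induction n) (simp_all add: assms orbit_point_0 inv_into_fmap orbit_point_in_torus
        orbit_point_orbit_point algebra_simps)
  ultimately show ?thesis by (simp add: fiter_def)
qed

definition binomial_transform_poly :: "(nat \<Rightarrow> 'a::comm_semiring_1) \<Rightarrow> nat \<Rightarrow> 'a poly" where
  "binomial_transform_poly y i = (\<Sum>j\<le>i. monom (of_nat (i choose j) * y j) (i - j))"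

lemma poly_binomial_transform_poly: "poly (binomial_transform_poly y i) k = binomial_transform k y i"
  by (simp add: binomial_transform_poly_def binomial_transform_def poly_sum poly_monom algebra_simps)

lemma degree_binomial_transform_poly: "degree (binomial_transform_poly y i) \<le> i"
  unfolding binomial_transform_poly_def
  by (intro degree_sum_le) (auto intro: order.trans[OF degree_monom_le])

lemma coeff_binomial_transform_poly:
  assumes "j \<le> i"
  shows "coeff (binomial_transform_poly y i) (i - j) = of_nat (i choose j) * y j"
proof -
  have "coeff (binomial_transform_poly y i) (i - j)
      = (\<Sum>l\<in>{j}. if i - l = i - j then of_nat (i choose l) * y l else 0)"
    unfolding binomial_transform_poly_def coeff_sum coeff_monom
    by (rule sum.mono_neutral_right) (use assms in auto)
  then show ?thesis by simp
qed

lemma coeff_binomial_transform_poly_top [simp]: "coeff (binomial_transform_poly y i) i = y 0"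
  using coeff_binomial_transform_poly[of 0 i y] by simp

lemma coeff_eq_sum_divided_differences:
  fixes p :: "'a::field poly" and h :: "'b \<Rightarrow> 'a"
  assumes J: "finite J" "card J = Suc n" "inj_on h J" and p: "degree p \<le> n"
  shows "coeff p n = (\<Sum>i\<in>J. poly p (h i) / (\<Prod>j\<in>J - {i}. h i - h j))"
proof -
  define w where "w i = (\<Prod>j\<in>J - {i}. h i - h j)" for i
  define B where "B i = (\<Prod>j\<in>J - {i}. [:- h j, 1:])" for i
  define L where "L = (\<Sum>i\<in>J. smult (poly p (h i) / w i) (B i))"
  have w_nonzero: "w i \<noteq> 0" if "i \<in> J" for i
    using J that by (auto simp: w_def inj_on_def)
  have poly_B: "poly (B i) (h l) = (\<Prod>j\<in>J - {i}. h l - h j)" for i l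
    by (simp add: B_def poly_prod)
  have B: "degree (B i) = n" "lead_coeff (B i) = 1" if "i \<in> J" for i
    using J that by (simp add: B_def degree_prod_eq_sum_degree, simp add: B_def lead_coeff_prod)
  have "poly L (h l) = poly p (h l)" if l: "l \<in> J" for l
  proof -
    have "poly L (h l) = (\<Sum>i\<in>{l}. poly p (h i) / w i * poly (B i) (h l))"
      unfolding L_def poly_sum poly_smult
      by (rule sum.mono_neutral_right) (use J l in \<open>auto simp: poly_B intro!: prod_zero\<close>)
    then show ?thesis using w_nonzero[OF l] by (simp add: poly_B w_def)
  qed
  moreover have "degree L \<le> n"
    unfolding L_def using B J by (intro degree_sum_le) (auto intro: order.trans[OF degree_smult_le])
  ultimately have "L = p"
    using J p by (intro poly_eqI_degree[of "h ` J"]) (auto simp: card_image)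
  moreover have "coeff L n = (\<Sum>i\<in>J. poly p (h i) / w i)"
    unfolding L_def coeff_sum using B by (intro sum.cong) simp_all
  ultimately show ?thesis by (simp add: w_def)
qed

definition last_coord_poly :: "nat \<Rightarrow> real \<Rightarrow> (nat \<Rightarrow> real) \<Rightarrow> real poly" where
  "last_coord_poly d z x = binomial_transform_poly (x(0 := z)) d"

lemma mem_Ix_iff:
  assumes "x \<in> torus d" "d \<ge> 1"
  shows "k \<in> Ix d z b x \<longleftrightarrow>
    (\<exists>t\<in>{1..b-1}. frac (poly (last_coord_poly d z x) (of_int k)) = log (real b) (real t))"
  using assms
  by (simp add: Ix_def critical_def fiter_eq_orbit_point orbit_point_in_torus)
     (simp add: orbit_point_def last_coord_poly_def poly_binomial_transform_poly)

lemma torus_eq_if_last_coord_poly_agree: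
  assumes x: "x \<in> torus d" and y: "y \<in> torus d" and A: "d \<le> card A"
    and agree: "\<And>k. k \<in> A \<Longrightarrow> poly (last_coord_poly d z x) k = poly (last_coord_poly d z y) k"
  shows "x = y"
proof -
  have "last_coord_poly d z x = last_coord_poly d z y"
    using A agree
    by (intro poly_eqI_degree_lead_coeff[of _ d _ A])
       (simp_all add: last_coord_poly_def degree_binomial_transform_poly)
  then have "real (d choose j) * x j = real (d choose j) * y j" if "j \<in> {1..d}" for j
    using that coeff_binomial_transform_poly[of j d "x(0 := z)"] coeff_binomial_transform_poly[of j d "y(0 := z)"]
    by (auto simp: last_coord_poly_def)
  then have "x j = y j" if "j \<in> {1..d}" for j
    using that by auto
  then show ?thesis
    using x y by (auto simp: fun_eq_iff torus_def) (metis atLeastAtMost_iff)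
qed

lemma abs_binomial_transform_le:
  fixes k :: real
  assumes "\<And>j. j \<le> i \<Longrightarrow> \<bar>y j\<bar> \<le> M"
  shows "\<bar>binomial_transform k y i\<bar> \<le> M * (\<bar>k\<bar> + 1) ^ i"
proof -
  have "\<bar>binomial_transform k y i\<bar> \<le> (\<Sum>j\<le>i. real (i choose j) * \<bar>k\<bar> ^ (i - j) * \<bar>y j\<bar>)"
    unfolding binomial_transform_def
    by (rule order.trans[OF sum_abs]) (simp add: abs_mult power_abs)
  also have "\<dots> \<le> (\<Sum>j\<le>i. real (i choose j) * \<bar>k\<bar> ^ (i - j) * M)"
    using assms by (intro sum_mono mult_left_mono) auto
  also have "\<dots> = M * (\<bar>k\<bar> + 1) ^ i"
    by (simp add: binomial_ring[of 1 "\<bar>k\<bar>"] add.commute sum_distrib_left algebra_simps)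
  finally show ?thesis .
qed

lemma finite_frac_mem_bounded:
  assumes "finite L"
  shows "finite {w :: real. frac w \<in> L \<and> \<bar>w\<bar> \<le> B}"
proof (rule finite_subset)
  show "{w. frac w \<in> L \<and> \<bar>w\<bar> \<le> B} \<subseteq> (\<lambda>(l, n). l + of_int n) ` (L \<times> {-\<lceil>B\<rceil> - 1..\<lceil>B\<rceil>})"
  proof
    fix w assume w: "w \<in> {w. frac w \<in> L \<and> \<bar>w\<bar> \<le> B}"
    have "\<lfloor>w\<rfloor> \<in> {-\<lceil>B\<rceil> - 1..\<lceil>B\<rceil>}"
      using w by (simp add: floor_le_iff le_floor_iff) linarith
    moreover have "w = frac w + of_int \<lfloor>w\<rfloor>" by (simp add: frac_def)
    ultimately show "w \<in> (\<lambda>(l, n). l + of_int n) ` (L \<times> {-\<lceil>B\<rceil> - 1..\<lceil>B\<rceil>})"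
      using w by force
  qed
qed (use assms in simp)

lemma finite_points_critical_at:
  assumes d: "d \<ge> 1" and I: "finite I" "card I = d"
  shows "finite {x \<in> torus d. I \<subseteq> Ix d z b x}"
proof -
  define S where "S = {x \<in> torus d. I \<subseteq> Ix d z b x}"
  define \<Phi> where "\<Phi> x = restrict (\<lambda>k. poly (last_coord_poly d z x) (of_int k)) I" for x
  define V where "V k = {w. frac w \<in> (\<lambda>t. log (real b) (real t)) ` {1..b-1}
      \<and> \<bar>w\<bar> \<le> max \<bar>z\<bar> 1 * (\<bar>of_int k\<bar> + 1) ^ d}" for k :: int
  have "inj_on \<Phi> S"
  proof (rule inj_onI)
    fix x y assume "x \<in> S" "y \<in> S" "\<Phi> x = \<Phi> y"
    show "x = y"
    proof (rule torus_eq_if_last_coord_poly_agree[of x d y "of_int ` I" z])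
      show "d \<le> card (of_int ` I :: real set)" using I by (simp add: card_image inj_on_def)
      fix k :: real assume "k \<in> of_int ` I"
      then obtain i where "i \<in> I" "k = of_int i" by blast
      moreover have "\<Phi> x i = \<Phi> y i" using \<open>\<Phi> x = \<Phi> y\<close> by simp
      ultimately show "poly (last_coord_poly d z x) k = poly (last_coord_poly d z y) k"
        by (simp add: \<Phi>_def)
    qed (use \<open>x \<in> S\<close> \<open>y \<in> S\<close> in \<open>auto simp: S_def\<close>)
  qed
  moreover have "\<Phi> ` S \<subseteq> PiE I V"
  proof (clarsimp simp: \<Phi>_def)
    fix x k assume x: "x \<in> S" and k: "k \<in> I"
    have "\<bar>(x(0 := z)) j\<bar> \<le> max \<bar>z\<bar> 1" for j
      using x unfolding S_def torus_def by (cases "j \<in> {1..d}") force+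
    then have "\<bar>poly (last_coord_poly d z x) (of_int k)\<bar> \<le> max \<bar>z\<bar> 1 * (\<bar>of_int k\<bar> + 1) ^ d"
      by (simp add: last_coord_poly_def poly_binomial_transform_poly abs_binomial_transform_le)
    moreover have "k \<in> Ix d z b x" using x k by (auto simp: S_def)
    ultimately show "poly (last_coord_poly d z x) (of_int k) \<in> V k"
      using x d by (auto simp: V_def S_def mem_Ix_iff)
  qed
  moreover have "finite (PiE I V)"
    using I by (intro finite_PiE) (simp_all add: V_def finite_frac_mem_bounded)
  ultimately show ?thesis
    unfolding S_def[symmetric] by (metis finite_imageD finite_subset)
qed

lemma exists_subset_card_containing:
  assumes X: "\<not> (finite X \<and> card X \<le> n)" and F: "F \<subseteq> X" "finite F" "card F \<le> Suc n"
  shows "\<exists>J. F \<subseteq> J \<and> J \<subseteq> X \<and> finite J \<and> card J = Suc n"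
proof -
  obtain A where A: "A \<subseteq> X - F" "finite A" "card A = Suc n - card F"
  proof (cases "finite X")
    case True
    then have "Suc n - card F \<le> card (X - F)"
      using X F by (simp add: card_Diff_subset)
    then show ?thesis using obtain_subset_with_card_n that by metis
  next
    case False
    then have "\<not> finite (X - F)" using F by simp
    then show ?thesis using infinite_arbitrarily_large that by metis
  qed
  then have "card (A \<union> F) = Suc n"
    using F by (subst card_Un_disjoint) auto
  then show ?thesis using A F by (intro exI[of _ "A \<union> F"]) auto
qed

definition primes_upto :: "nat \<Rightarrow> nat set" where
  "primes_upto b = {p. prime p \<and> p \<le> b}"

lemma finite_primes_upto [simp]: "finite (primes_upto b)"
  by (simp add: primes_upto_def)

lemma ln_eq_sum_multiplicity:
  assumes "1 \<le> n" "n \<le> b"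
  shows "ln (real n) = (\<Sum>p\<in>primes_upto b. real (multiplicity p n) * ln (real p))"
proof -
  have n: "n \<noteq> 0" using assms by simp
  have "real n = real (\<Prod>p\<in>prime_factors n. p ^ multiplicity p n)"
    using prod_prime_factors[OF n] by simp
  also have "\<dots> = (\<Prod>p\<in>prime_factors n. real p ^ multiplicity p n)"
    by simp
  finally have "real n = (\<Prod>p\<in>prime_factors n. real p ^ multiplicity p n)" .
  then have "ln (real n) = (\<Sum>p\<in>prime_factors n. ln (real p ^ multiplicity p n))"
    by (simp only:) (rule ln_prod, auto dest: in_prime_factors_imp_prime simp: prime_gt_0_nat)
  also have "\<dots> = (\<Sum>p\<in>prime_factors n. real (multiplicity p n) * ln (real p))"
    by (intro sum.cong refl) (auto dest: in_prime_factors_imp_prime simp: ln_realpow prime_gt_0_nat)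
  also have "\<dots> = (\<Sum>p\<in>primes_upto b. real (multiplicity p n) * ln (real p))"
  proof (rule sum.mono_neutral_left)
    show "prime_factors n \<subseteq> primes_upto b"
    proof
      fix p assume "p \<in> prime_factors n"
      then have "prime p" "p \<le> n"
        using n by (auto dest: in_prime_factors_imp_prime in_prime_factors_imp_dvd dvd_imp_le)
      then show "p \<in> primes_upto b" using assms by (simp add: primes_upto_def)
    qed
    show "\<forall>p\<in>primes_upto b - prime_factors n. real (multiplicity p n) * ln (real p) = 0"
      using n by (auto simp: prime_factors_multiplicity primes_upto_def)
  qed simp
  finally show ?thesis .
qed

lemma ln_primes_Ints_independent:
  fixes c :: "nat \<Rightarrow> int"
  assumes P: "finite P" "\<And>p. p \<in> P \<Longrightarrow> prime p"
    and sum_zero: "(\<Sum>p\<in>P. of_int (c p) * ln (real p)) = 0"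
  shows "\<forall>p\<in>P. c p = 0"
proof -
  define X where "X = (\<Prod>p\<in>P. p ^ nat (c p))"
  define Y where "Y = (\<Prod>p\<in>P. p ^ nat (- c p))"
  have ln_prod_powers: "ln (real (\<Prod>p\<in>P. p ^ e p)) = (\<Sum>p\<in>P. real (e p) * ln (real p))" for e
    using P by (simp add: ln_prod ln_realpow prime_gt_0_nat)
  have "real (nat (c p)) - real (nat (- c p)) = of_int (c p)" for p
    by (cases "c p \<ge> 0") auto
  then have "ln (real X) - ln (real Y) = (\<Sum>p\<in>P. of_int (c p) * ln (real p))"
    unfolding X_def Y_def ln_prod_powers sum_subtractf[symmetric] left_diff_distrib[symmetric]
    by simp
  then have "ln (real X) = ln (real Y)" using sum_zero by simp
  moreover have "X > 0" "Y > 0"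
    using P by (auto simp: X_def Y_def prime_gt_0_nat intro!: prod_pos)
  ultimately have "X = Y" by simp
  have "c q = 0" if "q \<in> P" for q
  proof -
    have "multiplicity q X = multiplicity q Y" using \<open>X = Y\<close> by simp
    then have "nat (c q) = nat (- c q)"
      using P that unfolding X_def Y_def by (simp add: multiplicity_prod_prime_powers)
    then show ?thesis by linarith
  qed
  then show ?thesis by blast
qed

lemma Rats_common_denominator:
  assumes "finite A" "\<And>x. x \<in> A \<Longrightarrow> f x \<in> \<rat>"
  shows "\<exists>m::nat. m > 0 \<and> (\<forall>x\<in>A. real m * f x \<in> \<int>)"
  using assms
proof (induction A rule: finite_induct)
  case empty
  show ?case by (intro exI[of _ 1]) simp
next
  case (insert x A)
  then obtain m where m: "m > 0" "\<forall>y\<in>A. real m * f y \<in> \<int>" by auto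
  have "f x \<in> \<rat>" using insert.prems by simp
  then obtain i n where x: "f x = of_int i / real n" "n \<noteq> 0"
    unfolding Rats_eq_int_div_nat by blast
  have "real (m * n) * f y \<in> \<int>" if "y \<in> A" for y
  proof -
    have "real (m * n) * f y = real n * (real m * f y)" by simp
    also have "\<dots> \<in> \<int>" by (rule Ints_mult) (use m that in auto)
    finally show ?thesis .
  qed
  moreover have "real (m * n) * f x \<in> \<int>" using x by simp
  ultimately show ?case using m x by (intro exI[of _ "m * n"]) auto
qed

lemma ln_primes_Rats_independent:
  assumes P: "finite P" "\<And>p. p \<in> P \<Longrightarrow> prime p"
    and c: "\<And>p. p \<in> P \<Longrightarrow> c p \<in> \<rat>"
    and sum_zero: "(\<Sum>p\<in>P. c p * ln (real p)) = 0"
  shows "\<forall>p\<in>P. c p = 0"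
proof -
  obtain m :: nat where m: "m > 0" "\<forall>p\<in>P. real m * c p \<in> \<int>"
    using Rats_common_denominator[of P c] P(1) c by auto
  define n where "n p = \<lfloor>real m * c p\<rfloor>" for p
  have n: "of_int (n p) = real m * c p" if "p \<in> P" for p
    using m that by (simp add: n_def)
  have "(\<Sum>p\<in>P. of_int (n p) * ln (real p)) = (\<Sum>p\<in>P. real m * (c p * ln (real p)))"
    by (intro sum.cong refl) (simp add: n)
  also have "\<dots> = 0" using sum_zero by (simp add: sum_distrib_left[symmetric])
  finally have "\<forall>p\<in>P. n p = 0"
    using ln_primes_Ints_independent[of P n] P by blast
  then show ?thesis using n m by simp
qed

definition ln_prime_expansion :: "nat \<Rightarrow> real \<Rightarrow> (nat \<Rightarrow> real) \<Rightarrow> bool" where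
  "ln_prime_expansion b a s \<longleftrightarrow>
     (\<forall>p\<in>primes_upto b. s p \<in> \<rat>) \<and> ln a = (\<Sum>p\<in>primes_upto b. s p * ln (real p))"

lemma ln_prime_expansion_unique:
  assumes "ln_prime_expansion b a s" "ln_prime_expansion b a r" "p \<in> primes_upto b"
  shows "s p = r p"
proof -
  have "(\<Sum>p\<in>primes_upto b. (s p - r p) * ln (real p)) = 0"
    using assms by (simp add: ln_prime_expansion_def left_diff_distrib sum_subtractf)
  then have "\<forall>p\<in>primes_upto b. s p - r p = 0"
    using assms by (intro ln_primes_Rats_independent) (auto simp: ln_prime_expansion_def primes_upto_def)
  then show ?thesis using assms(3) by simp
qed

lemma ln_prime_expansion_not_proportional:
  assumes b: "b \<ge> 2" and s: "ln_prime_expansion b a s" and irrational: "log (real b) a \<notin> \<rat>"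
  shows "\<exists>p\<in>primes_upto b. \<exists>q\<in>primes_upto b.
           s p * real (multiplicity q b) \<noteq> s q * real (multiplicity p b)"
proof (rule ccontr)
  assume "\<not> ?thesis"
  then have proportional: "s q * real (multiplicity p b) = s p * real (multiplicity q b)"
    if "p \<in> primes_upto b" "q \<in> primes_upto b" for p q
    using that by auto
  obtain p where p: "prime p" "p dvd b" using b prime_factor_nat[of b] by auto
  then have p_le: "p \<in> primes_upto b" using b by (auto simp: primes_upto_def dvd_imp_le)
  define v where "v = real (multiplicity p b)"
  have "v > 0" using p b by (simp add: v_def prime_multiplicity_gt_zero_iff)
  have "ln a = (\<Sum>q\<in>primes_upto b. s p / v * (real (multiplicity q b) * ln (real q)))"
    using s proportional[OF p_le] \<open>v > 0\<close>
    by (auto simp: ln_prime_expansion_def v_def field_simps intro!: sum.cong)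
  also have "\<dots> = s p / v * ln (real b)"
    using b by (simp add: ln_eq_sum_multiplicity[of b b] sum_distrib_left)
  finally have "log (real b) a = s p / v"
    using b by (simp add: log_def)
  moreover have "s p / v \<in> \<rat>"
    using s p_le by (simp add: ln_prime_expansion_def v_def)
  ultimately show False using irrational by simp
qed

lemma multiplicity_le_self:
  assumes "prime p" "n \<ge> 1"
  shows "multiplicity p n \<le> n"
proof -
  have "multiplicity p n < 2 ^ multiplicity p n" by (rule less_exp)
  also have "\<dots> \<le> p ^ multiplicity p n" using prime_ge_2_nat[OF assms(1)] by (simp add: power_mono)
  also have "\<dots> \<le> n" using assms(2) by (simp add: dvd_imp_le multiplicity_dvd)
  finally show ?thesis by simp
qed

lemma abs_multiplicity_cross_le:
  assumes "prime p" "prime q" "1 \<le> t" "t \<le> b"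
  shows "\<bar>real (multiplicity p t) * real (multiplicity q b)
            - real (multiplicity q t) * real (multiplicity p b)\<bar> \<le> real b ^ 2"
proof -
  have le: "real (multiplicity r n) \<le> real b" if "prime r" "1 \<le> n" "n \<le> b" for r n
    using multiplicity_le_self[OF that(1,2)] that(3) by simp
  have "real (multiplicity p t) * real (multiplicity q b) \<le> real b * real b"
    "real (multiplicity q t) * real (multiplicity p b) \<le> real b * real b"
    using assms by (intro mult_mono le; simp)+
  moreover have "0 \<le> real (multiplicity p t) * real (multiplicity q b)"
    "0 \<le> real (multiplicity q t) * real (multiplicity p b)"
    by simp_all
  ultimately show ?thesis unfolding power2_eq_square abs_le_iff by linarith
qed

lemma diff_le_two_abs_prod_diff:
  fixes J :: "int set"
  assumes "finite J" "i \<in> J" "k \<in> J" "l \<in> J" "l < k"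
  shows "k - l \<le> 2 * \<bar>\<Prod>j\<in>J - {i}. i - j\<bar>"
proof -
  have factor_le: "\<bar>i - j\<bar> \<le> \<bar>\<Prod>j\<in>J - {i}. i - j\<bar>" if "j \<in> J - {i}" for j
  proof -
    have "(\<Prod>j\<in>J - {i}. \<bar>i - j\<bar>) = \<bar>i - j\<bar> * (\<Prod>j\<in>J - {i} - {j}. \<bar>i - j\<bar>)"
      using assms(1) that by (simp add: prod.remove)
    moreover have "1 \<le> (\<Prod>j\<in>J - {i} - {j}. \<bar>i - j\<bar>)" by (intro prod_ge_1) auto
    ultimately show ?thesis by (simp add: abs_prod mult_le_cancel_left1)
  qed
  show ?thesis
    using factor_le[of k] factor_le[of l] assms by (cases "i = k \<or> i = l") auto
qed

lemma divided_difference_last_coord_poly: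
  fixes J :: "int set"
  assumes "finite J" "card J = Suc d"
  shows "z = (\<Sum>i\<in>J. poly (last_coord_poly d z x) (of_int i) / (\<Prod>j\<in>J - {i}. of_int i - of_int j))"
proof -
  have "z = coeff (last_coord_poly d z x) d"
    by (simp add: last_coord_poly_def)
  also have "\<dots> = (\<Sum>i\<in>J. poly (last_coord_poly d z x) (of_int i) / (\<Prod>j\<in>J - {i}. of_int i - of_int j))"
    using assms by (intro coeff_eq_sum_divided_differences)
      (auto simp: inj_on_def last_coord_poly_def degree_binomial_transform_poly)
  finally show ?thesis .
qed

lemma critical_ln_expansion:
  assumes x: "x \<in> torus d" and d: "d \<ge> 1" and b: "b \<ge> 2" and a: "a > 0"
    and J: "J \<subseteq> Ix d (log (real b) a) b x" "finite J" "card J = Suc d"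
  shows "\<exists>n t. (\<forall>i\<in>J. t i \<in> {1..b-1}) \<and> ln_prime_expansion b a (\<lambda>p. \<Sum>i\<in>J.
           (of_int (n i) * real (multiplicity p b) + real (multiplicity p (t i)))
           / (\<Prod>j\<in>J - {i}. of_int i - of_int j))"
proof -
  define z where "z = log (real b) a"
  define P where "P = last_coord_poly d z x"
  define w where "w i = (\<Prod>j\<in>J - {i}. real_of_int i - of_int j)" for i
  have "\<forall>i\<in>J. \<exists>t\<in>{1..b-1}. frac (poly P (of_int i)) = log (real b) (real t)"
    using J(1) mem_Ix_iff[OF x d] unfolding z_def P_def by blast
  then obtain t where t: "\<And>i. i \<in> J \<Longrightarrow> t i \<in> {1..b-1}"
    and frac_t: "\<And>i. i \<in> J \<Longrightarrow> frac (poly P (of_int i)) = log (real b) (real (t i))"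
    by metis
  define n where "n i = \<lfloor>poly P (of_int i)\<rfloor>" for i
  have "ln (real b) > 0" using b by simp
  have poly_P: "poly P (of_int i) * ln (real b) = of_int (n i) * ln (real b) + ln (real (t i))"
    if "i \<in> J" for i
  proof -
    have "poly P (of_int i) = of_int (n i) + log (real b) (real (t i))"
      using frac_t[OF that] by (simp add: n_def frac_def)
    then show ?thesis using \<open>ln (real b) > 0\<close> by (simp add: log_def field_simps)
  qed
  have "ln a = z * ln (real b)"
    using a b by (simp add: z_def log_def)
  also have "\<dots> = (\<Sum>i\<in>J. (of_int (n i) * ln (real b) + ln (real (t i))) / w i)"
    unfolding divided_difference_last_coord_poly[OF J(2,3), of z x, folded P_def w_def] sum_distrib_right
    by (intro sum.cong refl) (simp add: poly_P[symmetric])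
  also have "\<dots> = (\<Sum>i\<in>J. \<Sum>p\<in>primes_upto b.
      (of_int (n i) * real (multiplicity p b) + real (multiplicity p (t i))) / w i * ln (real p))"
  proof (intro sum.cong refl)
    fix i assume "i \<in> J"
    then have "1 \<le> t i" "t i \<le> b" using t[of i] by auto
    then show "(of_int (n i) * ln (real b) + ln (real (t i))) / w i = (\<Sum>p\<in>primes_upto b.
        (of_int (n i) * real (multiplicity p b) + real (multiplicity p (t i))) / w i * ln (real p))"
      using b ln_eq_sum_multiplicity[of b b] ln_eq_sum_multiplicity[of "t i" b]
      by (simp add: sum_distrib_left sum_divide_distrib sum.distrib add_divide_distrib algebra_simps)
  qed
  also have "\<dots> = (\<Sum>p\<in>primes_upto b. (\<Sum>i\<in>J.
      (of_int (n i) * real (multiplicity p b) + real (multiplicity p (t i))) / w i) * ln (real p))"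
    by (subst sum.swap) (simp add: sum_distrib_right)
  finally show ?thesis
    unfolding ln_prime_expansion_def w_def using t
    by (intro exI[of _ n] exI[of _ t])
      (auto intro!: Rats_sum Rats_divide Rats_add Rats_mult Rats_prod Rats_diff)
qed

lemma critical_cross_expansion:
  assumes x: "x \<in> torus d" and d: "d \<ge> 1" and b: "b \<ge> 2" and a: "a > 0"
    and s: "ln_prime_expansion b a s" and p: "p \<in> primes_upto b" and q: "q \<in> primes_upto b"
    and J: "J \<subseteq> Ix d (log (real b) a) b x" "finite J" "card J = Suc d"
  shows "\<exists>t. (\<forall>i\<in>J. t i \<in> {1..b-1}) \<and>
    s p * real (multiplicity q b) - s q * real (multiplicity p b) = (\<Sum>i\<in>J.
      (real (multiplicity p (t i)) * real (multiplicity q b)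
        - real (multiplicity q (t i)) * real (multiplicity p b))
      / (\<Prod>j\<in>J - {i}. of_int i - of_int j))"
proof -
  define w where "w i = (\<Prod>j\<in>J - {i}. real_of_int i - of_int j)" for i
  define m where "m p' n = real (multiplicity p' (n :: nat))" for p' :: nat and n
  obtain n t where t: "\<forall>i\<in>J. t i \<in> {1..b-1}"
    and r: "ln_prime_expansion b a (\<lambda>p. \<Sum>i\<in>J. (of_int (n i) * m p b + m p (t i)) / w i)"
    using critical_ln_expansion[OF x d b a J] unfolding w_def m_def by blast
  \<comment> \<open>The functional kills the expansion of ln b, so the unknown integer parts n i drop out.\<close>
  have "s p * m q b - s q * m p b = (\<Sum>i\<in>J.
      (of_int (n i) * m p b + m p (t i)) / w i * m q b - (of_int (n i) * m q b + m q (t i)) / w i * m p b)"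
    using ln_prime_expansion_unique[OF s r p] ln_prime_expansion_unique[OF s r q]
    by (simp add: sum_distrib_right sum_subtractf)
  also have "\<dots> = (\<Sum>i\<in>J. (m p (t i) * m q b - m q (t i) * m p b) / w i)"
    unfolding times_divide_eq_left diff_divide_distrib[symmetric]
    by (intro sum.cong refl arg_cong2[where f = "(/)"]) (simp_all add: algebra_simps)
  finally show ?thesis using t unfolding w_def m_def by blast
qed

lemma critical_spread_le:
  assumes x: "x \<in> torus d" and d: "d \<ge> 1" and b: "b \<ge> 2" and a: "a > 0"
    and s: "ln_prime_expansion b a s" and p: "p \<in> primes_upto b" and q: "q \<in> primes_upto b"
    and large: "\<not> (finite (Ix d (log (real b) a) b x) \<and> card (Ix d (log (real b) a) b x) \<le> d)"
    and k: "k \<in> Ix d (log (real b) a) b x" and l: "l \<in> Ix d (log (real b) a) b x" and "l < k"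
  shows "of_int (k - l) * \<bar>s p * real (multiplicity q b) - s q * real (multiplicity p b)\<bar>
         \<le> 2 * (real d + 1) * real b ^ 2"
proof -
  have "card {k, l} \<le> Suc d" using d by (simp add: card_insert_if)
  then obtain J where J: "{k, l} \<subseteq> J" "J \<subseteq> Ix d (log (real b) a) b x" "finite J" "card J = Suc d"
    using exists_subset_card_containing[OF large, of "{k, l}"] k l by blast
  define w where "w i = (\<Prod>j\<in>J - {i}. real_of_int i - of_int j)" for i
  obtain t where t: "\<forall>i\<in>J. t i \<in> {1..b-1}" and cross:
    "s p * real (multiplicity q b) - s q * real (multiplicity p b) = (\<Sum>i\<in>J.
      (real (multiplicity p (t i)) * real (multiplicity q b)
        - real (multiplicity q (t i)) * real (multiplicity p b)) / w i)"
    using critical_cross_expansion[OF x d b a s p q J(2-4)] unfolding w_def by blast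
  define c where "c i = real (multiplicity p (t i)) * real (multiplicity q b)
    - real (multiplicity q (t i)) * real (multiplicity p b)" for i
  have "of_int (k - l) * \<bar>s p * real (multiplicity q b) - s q * real (multiplicity p b)\<bar>
      \<le> of_int (k - l) * (\<Sum>i\<in>J. \<bar>c i\<bar> / \<bar>w i\<bar>)"
    unfolding cross c_def[symmetric] using \<open>l < k\<close>
    by (intro mult_left_mono order.trans[OF sum_abs]) (simp_all add: abs_divide)
  also have "\<dots> = (\<Sum>i\<in>J. of_int (k - l) * \<bar>c i\<bar> / \<bar>w i\<bar>)"
    by (simp add: sum_distrib_left)
  also have "\<dots> \<le> (\<Sum>i\<in>J. 2 * real b ^ 2)"
  proof (intro sum_mono)
    fix i assume i: "i \<in> J"
    have "real_of_int (k - l) \<le> 2 * \<bar>w i\<bar>"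
      using diff_le_two_abs_prod_diff[OF J(3) i, of k l] J(1) \<open>l < k\<close>
      by (simp add: w_def flip: of_int_diff of_int_prod of_int_abs)
    moreover have "\<bar>c i\<bar> \<le> real b ^ 2"
      using p q t i unfolding c_def primes_upto_def
      by (intro abs_multiplicity_cross_le) auto
    ultimately have "of_int (k - l) * \<bar>c i\<bar> \<le> 2 * \<bar>w i\<bar> * real b ^ 2"
      by (intro mult_mono) auto
    then show "of_int (k - l) * \<bar>c i\<bar> / \<bar>w i\<bar> \<le> 2 * real b ^ 2"
      by (cases "w i = 0") (simp_all add: divide_le_eq algebra_simps)
  qed
  also have "\<dots> = 2 * (real d + 1) * real b ^ 2"
    using J(4) by simp
  finally show ?thesis .
qed

lemma critical_spread_bounded:
  assumes d: "d \<ge> 1" and b: "b \<ge> 2" and a: "a > 0" and irrational: "log (real b) a \<notin> \<rat>"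
  shows "\<exists>C. \<forall>x\<in>torus d.
           \<not> (finite (Ix d (log (real b) a) b x) \<and> card (Ix d (log (real b) a) b x) \<le> d) \<longrightarrow>
           (\<forall>k\<in>Ix d (log (real b) a) b x. \<forall>l\<in>Ix d (log (real b) a) b x. real_of_int (k - l) \<le> C)"
proof (cases "\<exists>s. ln_prime_expansion b a s")
  case True
  then obtain s where s: "ln_prime_expansion b a s" by blast
  then obtain p q where pq: "p \<in> primes_upto b" "q \<in> primes_upto b"
    and "s p * real (multiplicity q b) \<noteq> s q * real (multiplicity p b)"
    using ln_prime_expansion_not_proportional[OF b _ irrational] by blast
  define \<delta> where "\<delta> = \<bar>s p * real (multiplicity q b) - s q * real (multiplicity p b)\<bar>"
  have "\<delta> > 0" using \<open>s p * _ \<noteq> _\<close> by (simp add: \<delta>_def)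
  show ?thesis
  proof (intro exI ballI impI)
    fix x k l
    assume x: "x \<in> torus d"
      and large: "\<not> (finite (Ix d (log (real b) a) b x) \<and> card (Ix d (log (real b) a) b x) \<le> d)"
      and k: "k \<in> Ix d (log (real b) a) b x" and l: "l \<in> Ix d (log (real b) a) b x"
    show "real_of_int (k - l) \<le> 2 * (real d + 1) * real b ^ 2 / \<delta>"
    proof (cases "l < k")
      case True
      then have "real_of_int (k - l) * \<delta> \<le> 2 * (real d + 1) * real b ^ 2"
        unfolding \<delta>_def by (rule critical_spread_le[OF x d b a s pq large k l])
      then show ?thesis by (subst pos_le_divide_eq[OF \<open>\<delta> > 0\<close>])
    next
      case False
      then have "real_of_int (k - l) \<le> 0" by simp
      also have "0 \<le> 2 * (real d + 1) * real b ^ 2 / \<delta>" using \<open>\<delta> > 0\<close> by simp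
      finally show ?thesis .
    qed
  qed
next
  case False
  have "finite (Ix d (log (real b) a) b x) \<and> card (Ix d (log (real b) a) b x) \<le> d"
    if x: "x \<in> torus d" for x
  proof (rule ccontr)
    assume "\<not> (finite (Ix d (log (real b) a) b x) \<and> card (Ix d (log (real b) a) b x) \<le> d)"
    from exists_subset_card_containing[OF this, of "{}"]
    obtain J where "J \<subseteq> Ix d (log (real b) a) b x" "finite J" "card J = Suc d" by auto
    from critical_ln_expansion[OF x d b a this] show False using False by blast
  qed
  then show ?thesis by blast
qed

theorem mainTheorem8:
  fixes d b :: nat and a :: real
  assumes "d \<ge> 1" and "b \<ge> 5" and "a > 0"
    and "log (real b) a \<notin> \<rat>"
  shows "(\<forall>I :: int set. finite I \<and> card I = d \<longrightarrow>
            finite {x \<in> torus d. I \<subseteq> Ix d (log (real b) a) b x})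
       \<and> (\<exists>C :: real. \<forall>x \<in> torus d.
            \<not> (finite (Ix d (log (real b) a) b x) \<and> card (Ix d (log (real b) a) b x) \<le> d) \<longrightarrow>
            (\<forall>k \<in> Ix d (log (real b) a) b x. \<forall>l \<in> Ix d (log (real b) a) b x. real_of_int (k - l) \<le> C))"
proof -
  \<comment> \<open>The argument only needs b \<ge> 2.\<close>
  have "b \<ge> 2" using assms(2) by simp
  with assms show ?thesis
    using finite_points_critical_at critical_spread_bounded by blast
qed

end
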